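(* Let $N\ge 1$ and let $L=\sum_{i=0}^N a_i(x)\partial_x^i$, where each $a_i$ is a complex polynomial with $\deg a_i\le i$, written $a_i(x)=\sum_{j=0}^i a_{i,j}x^j$, with $a_0\equiv 0$ and with the convention $a_i\equiv 0$ (all $a_{i,j}=0$) for $i>N$. For $n\ge 0$ and $0\le k\le n$ put $$\delta_n^{(k)}=\sum_{i=k}^{n}\binom{n}{i}\, i!\, a_{i,i-k}.$$ 1. For every $n\ge 0$, every $\lambda_n\in\mathbb{C}$ and every monic polynomial $P_n(x)=\sum_{i=0}^n b_{n,i}x^i$ of degree $n$ ($b_{n,n}=1$, and $b_{n,s}=0$ for $s>n$), the identity $\sum_{i=1}^N a_i(x)\partial_x^iP_n(x)=\lambda_nP_n(x)$ holds if and only if $$\sum_{k=0}^N\delta_{m+k}^{(k)}\, b_{n,m+k}=\lambda_n b_{n,m},\qquad m=0,1,\ldots,n.$$ 2. Suppose that there are complex numbers $\lambda_n$ ($n\ge 0$, $\lambda_0=0$) and monic polynomials $P_n$ of degree $n$ with $\sum_{i=1}^N a_i\partial_x^iP_n=\lambda_nP_n$ for all $n\ge0$. Let $M$ be the semi-infinite upper triangular matrix with entries (rows and columns indexed from $0$) $M_{r,c}=\delta_c^{(c-r)}$ if $0\le c-r\le N$ and $M_{r,c}=0$ otherwise, and let $M_{n+1}$ be its truncation to the first $n+1$ rows and columns. Assume $\lambda_n\notin\{0,\lambda_1,\ldots,\lambda_{n-1}\}$ for all $n=1,2,\ldots$. Then for each $n\ge1$, $P_n$ is the unique monic polynomial (of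 degree $n$) satisfying $\sum_{i=1}^N a_i\partial_x^iP_n=\lambda_nP_n$, and its coefficient vector $b_n=(b_{n,0},\ldots,b_{n,n-1},1)^T$ is an eigenvector of $M_{n+1}$ for the eigenvalue $\lambda_n$, i.e. $(M_{n+1}-\lambda_nI_{n+1})b_n=0$.
   Context: $\partial_x^i$ denotes the $i$-th derivative with respect to $x$. The normalization $a_0\equiv0$, $\lambda_0=0$ is a standing convention of the paper. *)

theory Defs
  imports "HOL-Computational_Algebra.Polynomial"
begin

definition Lop :: "nat \<Rightarrow> (nat \<Rightarrow> complex poly) \<Rightarrow> complex poly \<Rightarrow> complex poly" where
  "Lop N a p = (\<Sum>i=1..N. a i * (pderiv ^^ i) p)"

definition delta :: "(nat \<Rightarrow> complex poly) \<Rightarrow> nat \<Rightarrow> nat \<Rightarrow> complex" where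
  "delta a n k = (\<Sum>i=k..n. of_nat (n choose i) * fact i * coeff (a i) (i - k))"

definition Mmat :: "nat \<Rightarrow> (nat \<Rightarrow> complex poly) \<Rightarrow> nat \<Rightarrow> nat \<Rightarrow> complex" where
  "Mmat N a r c = (if r \<le> c \<and> c - r \<le> N then delta a c (c - r) else 0)"

end

theory Submission
  imports Defs
begin

text \<open>
  The coefficient of x^m in the i-th derivative of P is (m+i choose i) i! b_{m+i}. Writing the
  monomials of a_i as x^(i-k), the coefficient of x^m in L P becomes
  sum_k delta_{m+k}^(k) b_{m+k}; the binomial coefficient vanishes exactly on the terms that do
  not occur. This gives part 1 and, row by row, the eigenvector equation for M. In particular L
  does not raise degrees and acts on the top coefficient of a nonzero D of degree d as
  multiplication by delta_d^(0), so that is the only possible eigenvalue of D, and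
  lambda_d = delta_d^(0). The difference of two monic eigenpolynomials of degree n for lambda_n
  has lower degree d, hence vanishes since lambda_n differs from lambda_d and from lambda_0 = 0.
\<close>

lemma pochhammer_Suc_of_nat:
  "pochhammer (of_nat (Suc n) :: 'a :: field_char_0) k = of_nat ((n + k) choose k) * fact k"
proof -
  have "(of_nat ((n + k) choose k) :: 'a) = pochhammer (of_nat (n + k) - of_nat k + 1) k / fact k"
    by (simp add: binomial_gbinomial gbinomial_pochhammer')
  then show ?thesis
    by (simp add: field_simps)
qed

lemma coeff_higher_pderiv_binomial:
  fixes p :: "'a :: field_char_0 poly"
  shows "coeff ((pderiv ^^ k) p) n = of_nat ((n + k) choose k) * fact k * coeff p (n + k)"
  unfolding coeff_higher_pderiv pochhammer_Suc_of_nat ..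

lemma coeff_mult_higher_pderiv:
  fixes p q :: "'a :: field_char_0 poly"
  assumes "degree q \<le> i"
  shows "coeff (q * (pderiv ^^ i) p) m =
    (\<Sum>k=0..i. coeff q (i - k) * of_nat ((m + k) choose i) * fact i * coeff p (m + k))"
proof -
  define h where "h j = coeff q j * of_nat ((m + i - j) choose i) * fact i * coeff p (m + i - j)" for j
  have "coeff (q * (pderiv ^^ i) p) m = (\<Sum>j\<le>m. h j)"
    by (auto simp: coeff_mult coeff_higher_pderiv_binomial h_def mult_ac intro!: sum.cong)
  also have "\<dots> = (\<Sum>j\<in>{..m} \<inter> {0..i}. h j)"
    using assms by (intro sum.mono_neutral_right) (auto simp: h_def coeff_eq_0)
  also have "\<dots> = (\<Sum>j=0..i. h j)"
    by (intro sum.mono_neutral_left) (auto simp: h_def)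
  also have "\<dots> = (\<Sum>k=0..i. h (i - k))"
    by (subst sum.atLeastAtMost_rev) simp
  also have "\<dots> = (\<Sum>k=0..i. coeff q (i - k) * of_nat ((m + k) choose i) * fact i * coeff p (m + k))"
    by (intro sum.cong) (auto simp: h_def)
  finally show ?thesis .
qed

lemma sum_atMost_triangle_swap:
  fixes n :: nat
  shows "(\<Sum>i\<le>n. \<Sum>k=0..i. f i k) = (\<Sum>k\<le>n. \<Sum>i=k..n. f i k :: 'a :: comm_monoid_add)"
  by (induction n) (simp_all add: sum.distrib atLeast0AtMost)

lemma Lop_diff: "Lop N a (p - q) = Lop N a p - Lop N a q"
proof -
  have higher_pderiv_diff: "(pderiv ^^ i) (p - q) = (pderiv ^^ i) p - (pderiv ^^ i) q" for i
    by (simp add: poly_eq_iff coeff_higher_pderiv algebra_simps)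
  show ?thesis
    unfolding Lop_def higher_pderiv_diff right_diff_distrib sum_subtractf ..
qed

lemma Mmat_row_sum:
  assumes "degree p \<le> n"
  shows "(\<Sum>c=0..n. Mmat N a r c * coeff p c) = (\<Sum>k=0..N. delta a (r + k) k * coeff p (r + k))"
proof -
  have "(\<Sum>c=0..n. Mmat N a r c * coeff p c) = (\<Sum>c=0..n+N+r. Mmat N a r c * coeff p c)"
    using assms by (intro sum.mono_neutral_left) (auto simp: coeff_eq_0)
  also have "\<dots> = (\<Sum>c=r..r+N. delta a c (c - r) * coeff p c)"
    by (intro sum.mono_neutral_cong_right) (auto simp: Mmat_def)
  also have "\<dots> = (\<Sum>k=0..N. delta a (r + k) k * coeff p (r + k))"
    using sum.shift_bounds_cl_nat_ivl[of "\<lambda>c. delta a c (c - r) * coeff p c" 0 r N]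
    by (simp add: add.commute)
  finally show ?thesis .
qed

locale degree_preserving_operator =
  fixes N :: nat and a :: "nat \<Rightarrow> complex poly"
  assumes degree_a: "degree (a i) \<le> i"
    and a_0: "a 0 = 0"
    and a_beyond: "N < i \<Longrightarrow> a i = 0"
begin

lemma coeff_Lop: "coeff (Lop N a p) m = (\<Sum>k=0..N. delta a (m + k) k * coeff p (m + k))"
proof -
  define c where "c i k = coeff (a i) (i - k) * of_nat ((m + k) choose i) * fact i * coeff p (m + k)" for i k
  have row: "(\<Sum>i=k..N. c i k) = delta a (m + k) k * coeff p (m + k)" for k
  proof -
    have "(\<Sum>i=k..N. c i k) = (\<Sum>i=k..N+m+k. c i k)"
      by (intro sum.mono_neutral_left) (auto simp: c_def a_beyond)
    also have "\<dots> = (\<Sum>i=k..m+k. c i k)"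
      by (intro sum.mono_neutral_right) (auto simp: c_def)
    finally show ?thesis
      unfolding c_def delta_def sum_distrib_right by (simp add: mult_ac)
  qed
  have "coeff (Lop N a p) m = (\<Sum>i=1..N. \<Sum>k=0..i. c i k)"
    by (simp add: Lop_def coeff_sum coeff_mult_higher_pderiv degree_a c_def)
  also have "\<dots> = (\<Sum>i\<le>N. \<Sum>k=0..i. c i k)"
    by (intro sum.mono_neutral_left) (auto simp: c_def a_0 Suc_le_eq)
  also have "\<dots> = (\<Sum>k\<le>N. \<Sum>i=k..N. c i k)"
    by (rule sum_atMost_triangle_swap)
  finally show ?thesis
    by (simp add: row atLeast0AtMost)
qed

lemma Lop_eq_smult_iff:
  assumes "degree p \<le> n"
  shows "Lop N a p = smult lam p \<longleftrightarrow>
    (\<forall>m\<le>n. (\<Sum>k=0..N. delta a (m + k) k * coeff p (m + k)) = lam * coeff p m)"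
proof -
  have "coeff (Lop N a p) m = lam * coeff p m" if "n < m" for m
    using assms that by (simp add: coeff_Lop coeff_eq_0)
  then have "Lop N a p = smult lam p \<longleftrightarrow> (\<forall>m\<le>n. coeff (Lop N a p) m = lam * coeff p m)"
    by (metis coeff_smult not_le poly_eq_iff)
  then show ?thesis
    by (simp add: coeff_Lop)
qed

lemma Mmat_eigenvector:
  assumes "degree p \<le> n" "Lop N a p = smult lam p" "r \<le> n"
  shows "(\<Sum>c=0..n. Mmat N a r c * coeff p c) = lam * coeff p r"
  using assms by (simp add: Mmat_row_sum Lop_eq_smult_iff)

lemma coeff_Lop_top:
  assumes "degree p \<le> d"
  shows "coeff (Lop N a p) d = delta a d 0 * coeff p d"
proof -
  have "(\<Sum>k=0..N. delta a (d + k) k * coeff p (d + k)) = (\<Sum>k\<in>{0}. delta a (d + k) k * coeff p (d + k))"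
    using assms by (intro sum.mono_neutral_right) (auto simp: coeff_eq_0)
  then show ?thesis
    by (simp add: coeff_Lop)
qed

lemma eigenvalue_eq_delta:
  assumes "Lop N a p = smult lam p" and "p \<noteq> 0"
  shows "lam = delta a (degree p) 0"
  using coeff_Lop_top[of p "degree p"] assms by simp

lemma monic_eigenpolynomial_unique:
  assumes "degree p = n" "lead_coeff p = 1" "Lop N a p = smult lam p"
    and "degree q = n" "lead_coeff q = 1" "Lop N a q = smult lam q"
    and "\<And>d. d < n \<Longrightarrow> delta a d 0 \<noteq> lam"
  shows "p = q"
proof (rule ccontr)
  assume "p \<noteq> q"
  then have "p - q \<noteq> 0"
    by simp
  moreover have "degree (p - q) \<le> n" and "coeff (p - q) n = 0"
    using assms by (auto intro: degree_diff_le)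
  ultimately have "degree (p - q) < n"
    by (metis le_neq_implies_less leading_coeff_0_iff)
  moreover have "Lop N a (p - q) = smult lam (p - q)"
    using assms by (simp add: Lop_diff smult_diff_right)
  ultimately show False
    using eigenvalue_eq_delta \<open>p - q \<noteq> 0\<close> assms(7) by metis
qed

end

theorem theorem1:
  fixes N :: nat and a :: "nat \<Rightarrow> complex poly"
  assumes N1: "N \<ge> 1"
    and deg_a: "\<And>i. degree (a i) \<le> i"
    and a0: "a 0 = 0"
    and a_big: "\<And>i. i > N \<Longrightarrow> a i = 0"
  shows
    "(\<forall>n (lam::complex) (P::complex poly). degree P = n \<longrightarrow> lead_coeff P = 1 \<longrightarrow>
        (Lop N a P = smult lam P \<longleftrightarrow>
         (\<forall>m\<le>n. (\<Sum>k=0..N. delta a (m + k) k * coeff P (m + k)) = lam * coeff P m)))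
     \<and>
     (\<forall>(lam::nat \<Rightarrow> complex) (P::nat \<Rightarrow> complex poly).
        lam 0 = 0 \<longrightarrow>
        (\<forall>n. degree (P n) = n \<and> lead_coeff (P n) = 1 \<and> Lop N a (P n) = smult (lam n) (P n)) \<longrightarrow>
        (\<forall>n\<ge>1. lam n \<noteq> 0 \<and> (\<forall>j\<in>{1..<n}. lam n \<noteq> lam j)) \<longrightarrow>
        (\<forall>n\<ge>1.
           (\<forall>Q::complex poly. degree Q = n \<and> lead_coeff Q = 1 \<and> Lop N a Q = smult (lam n) Q
               \<longrightarrow> Q = P n)
         \<and> (\<forall>r\<le>n. (\<Sum>c=0..n. Mmat N a r c * coeff (P n) c) - lam n * coeff (P n) r = 0)))"
proof -
  interpret degree_preserving_operator N a
    using deg_a a0 a_big by unfold_locales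
  show ?thesis
  proof (intro conjI allI impI)
    fix lam :: "nat \<Rightarrow> complex" and P :: "nat \<Rightarrow> complex poly" and n :: nat
    assume "lam 0 = 0" and P: "\<forall>n. degree (P n) = n \<and> lead_coeff (P n) = 1 \<and> Lop N a (P n) = smult (lam n) (P n)"
      and lam_new: "\<forall>n\<ge>1. lam n \<noteq> 0 \<and> (\<forall>j\<in>{1..<n}. lam n \<noteq> lam j)" and "n \<ge> 1"
    have lam_eq: "lam d = delta a d 0" for d
      using P eigenvalue_eq_delta[of "P d" "lam d"] by (metis leading_coeff_0_iff zero_neq_one)
    have "lam n \<noteq> 0" "\<forall>j\<in>{1..<n}. lam n \<noteq> lam j"
      using lam_new \<open>n \<ge> 1\<close> by auto
    then have "delta a d 0 \<noteq> lam n" if "d < n" for d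
      using \<open>lam 0 = 0\<close> that unfolding lam_eq [symmetric]
      by (metis atLeastLessThan_iff less_one linorder_not_le)
    then show "Q = P n" if "degree Q = n \<and> lead_coeff Q = 1 \<and> Lop N a Q = smult (lam n) Q" for Q
      using P that monic_eigenpolynomial_unique by blast
    show "(\<Sum>c=0..n. Mmat N a r c * coeff (P n) c) - lam n * coeff (P n) r = 0" if "r \<le> n" for r
      using P that by (simp add: Mmat_eigenvector)
  qed (simp add: Lop_eq_smult_iff)
qed

end
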